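(* Let $T$ be a non-star tree containing an edge $xy$ with $d_T(x)=1$ and $d_T(y)\ge 3$. Suppose that for every neighbor $y'\ne x$ of $y$, the tree $T_{(y',y)}$ is a neighbor $F$-tree of $y$ which is not a single vertex (i.e. not isomorphic to $P_1$). Then there exists a $(T,x)$-well 2-placement.
   Context: All graphs are finite, simple and undirected; $P_k$ is the path on $k$ vertices. A non-star tree is a tree not isomorphic to a star $K_{1,m}$ for any $m\ge0$. For an edge $ab$ of a tree $T$, $T_{(a,b)}$ denotes the connected component containing $a$ in $T-\{ab\}$; it is a neighbor $F$-tree of $b$ if it is a path with at most $3$ vertices and, when it has exactly $3$ vertices, $a$ is an end vertex of it. A permutation $\sigma$ of $V(T)$ is a 2-placement of $T$ if $\sigma(a)\sigma(b)\notin E(T)$ for every edge $ab\in E(T)$; $\sigma(T)\subseteq T^k$ means $dist_T(\sigma(a),\sigma(b))\le k$ for every edge $ab$ of $T$. A fixed-point-free permutation $\sigma$ of $V(T)$ is a $(T,x)$-well 2-placement if (distances and degrees in $T$): (1) $\sigma$ is a 2-placement of $T$; (2) $\sigma(T)\subseteq T^6$; (3) $dist(x,\sigma(x))\le 2$; (4) $dist(w,\sigma(w))\le 3$ for every neighbor $w$ of $x$; (5) $dist(w,\sigma(w))\le 4$ for every $w$ of degree $1$; (6) every cycle of $\sigma$ (in its disjoint cycle decomposition) has length at most $5$. *)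

theory Defs
  imports "HOL-Combinatorics.Permutations"
begin

definition simple_graph :: "'a set \<Rightarrow> ('a \<Rightarrow> 'a \<Rightarrow> bool) \<Rightarrow> bool" where
  "simple_graph V E \<longleftrightarrow> finite V \<and> (\<forall>u v. E u v \<longrightarrow> u \<in> V \<and> v \<in> V)
     \<and> (\<forall>u v. E u v \<longrightarrow> E v u) \<and> (\<forall>u. \<not> E u u)"

definition walk_from_to :: "('a \<Rightarrow> 'a \<Rightarrow> bool) \<Rightarrow> 'a \<Rightarrow> 'a \<Rightarrow> 'a list \<Rightarrow> bool" where
  "walk_from_to E u v xs \<longleftrightarrow> xs \<noteq> [] \<and> hd xs = u \<and> last xs = v \<and> successively E xs"

definition connected_graph :: "'a set \<Rightarrow> ('a \<Rightarrow> 'a \<Rightarrow> bool) \<Rightarrow> bool" where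
  "connected_graph V E \<longleftrightarrow> (\<forall>u\<in>V. \<forall>v\<in>V. \<exists>xs. walk_from_to E u v xs)"

definition acyclic_graph :: "('a \<Rightarrow> 'a \<Rightarrow> bool) \<Rightarrow> bool" where
  "acyclic_graph E \<longleftrightarrow> \<not> (\<exists>xs. length xs \<ge> 3 \<and> distinct xs \<and> successively E xs \<and> E (last xs) (hd xs))"

definition is_tree :: "'a set \<Rightarrow> ('a \<Rightarrow> 'a \<Rightarrow> bool) \<Rightarrow> bool" where
  "is_tree V E \<longleftrightarrow> simple_graph V E \<and> V \<noteq> {} \<and> connected_graph V E \<and> acyclic_graph E"

definition is_star :: "'a set \<Rightarrow> ('a \<Rightarrow> 'a \<Rightarrow> bool) \<Rightarrow> bool" where
  "is_star V E \<longleftrightarrow> (\<exists>c\<in>V. (\<forall>u\<in>V. u \<noteq> c \<longrightarrow> E c u) \<and> (\<forall>u v. E u v \<longrightarrow> u = c \<or> v = c))"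

definition deg :: "'a set \<Rightarrow> ('a \<Rightarrow> 'a \<Rightarrow> bool) \<Rightarrow> 'a \<Rightarrow> nat" where
  "deg V E u = card {v\<in>V. E u v}"

definition gdist :: "('a \<Rightarrow> 'a \<Rightarrow> bool) \<Rightarrow> 'a \<Rightarrow> 'a \<Rightarrow> nat" where
  "gdist E u v = (LEAST n. \<exists>xs. walk_from_to E u v xs \<and> length xs = Suc n)"

text \<open>T_(a,b): vertex set of the component containing a in T - {ab}.\<close>
definition comp_minus_edge :: "('a \<Rightarrow> 'a \<Rightarrow> bool) \<Rightarrow> 'a \<Rightarrow> 'a \<Rightarrow> 'a set" where
  "comp_minus_edge E a b =
     {v. \<exists>xs. walk_from_to (\<lambda>p q. E p q \<and> {p, q} \<noteq> {a, b}) a v xs}"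

definition induced_path :: "('a \<Rightarrow> 'a \<Rightarrow> bool) \<Rightarrow> 'a set \<Rightarrow> 'a list \<Rightarrow> bool" where
  "induced_path E C xs \<longleftrightarrow> set xs = C \<and> distinct xs \<and>
     (\<forall>u\<in>C. \<forall>v\<in>C. E u v \<longleftrightarrow> (\<exists>i. Suc i < length xs \<and> {xs ! i, xs ! Suc i} = {u, v}))"

definition nbr_F_tree :: "('a \<Rightarrow> 'a \<Rightarrow> bool) \<Rightarrow> 'a \<Rightarrow> 'a \<Rightarrow> bool" where
  "nbr_F_tree E a b \<longleftrightarrow> E a b \<and>
     (let C = comp_minus_edge E a b in
        \<exists>xs. induced_path E C xs \<and> length xs \<le> 3 \<and>
             (length xs = 3 \<longrightarrow> (a = hd xs \<or> a = last xs)))"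

definition cycle_len :: "('a \<Rightarrow> 'a) \<Rightarrow> 'a \<Rightarrow> nat" where
  "cycle_len s v = (LEAST k. k > 0 \<and> (s ^^ k) v = v)"

definition two_placement :: "('a \<Rightarrow> 'a \<Rightarrow> bool) \<Rightarrow> ('a \<Rightarrow> 'a) \<Rightarrow> bool" where
  "two_placement E s \<longleftrightarrow> (\<forall>a b. E a b \<longrightarrow> \<not> E (s a) (s b))"

definition well_2_placement :: "'a set \<Rightarrow> ('a \<Rightarrow> 'a \<Rightarrow> bool) \<Rightarrow> 'a \<Rightarrow> ('a \<Rightarrow> 'a) \<Rightarrow> bool" where
  "well_2_placement V E x s \<longleftrightarrow>
     s permutes V \<and> (\<forall>v\<in>V. s v \<noteq> v) \<and>
     two_placement E s \<and>
     (\<forall>a b. E a b \<longrightarrow> gdist E (s a) (s b) \<le> 6) \<and>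
     gdist E x (s x) \<le> 2 \<and>
     (\<forall>w. E x w \<longrightarrow> gdist E w (s w) \<le> 3) \<and>
     (\<forall>w\<in>V. deg V E w = 1 \<longrightarrow> gdist E w (s w) \<le> 4) \<and>
     (\<forall>v\<in>V. cycle_len s v \<le> 5)"

end

theory Submission
  imports Defs
begin

text \<open>Apart from the pendant edge \<open>xy\<close>, the tree is a spider with centre \<open>y\<close> whose legs
  \<open>a - b\<close> or \<open>a - b - c\<close> start at the other neighbours \<open>a\<close> of \<open>y\<close>. Pair the legs by an
  involution with at most one fixed leg \<open>a0\<close>. The vertices of two paired legs are permuted among
  themselves by cycles of length 3 to 5, and \<open>x\<close>, \<open>y\<close> are absorbed by the cycles through \<open>a0\<close>
  (and its partner, if it has one); no edge is mapped onto an edge. All vertices lie within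
  distance 3 of \<open>y\<close>, and every vertex is sent either to a neighbour or to a vertex at most 4 away
  via \<open>y\<close>, which gives the distance bounds.\<close>

section \<open>Walks, distances and involutions\<close>

lemma walk_from_to_closed:
  assumes "walk_from_to R u v xs" "u \<in> S" "\<And>a b. a \<in> S \<Longrightarrow> R a b \<Longrightarrow> b \<in> S"
  shows "v \<in> S"
proof -
  have "last xs \<in> S" if "successively R xs" "xs \<noteq> []" "hd xs \<in> S" for xs
    using that
  proof (induction xs rule: induct_list012)
    case (3 a b zs)
    then show ?case using assms(3)[of a b] by simp
  qed simp_all
  then show ?thesis using assms(1,2) unfolding walk_from_to_def by blast
qed

lemma walk_from_to_snoc: "walk_from_to R u v xs \<Longrightarrow> R v w \<Longrightarrow> walk_from_to R u w (xs @ [w])"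
  unfolding walk_from_to_def by (auto simp: successively_append_iff)

lemma walk_from_to_append:
  "walk_from_to R u v xs \<Longrightarrow> walk_from_to R v w ys \<Longrightarrow> walk_from_to R u w (xs @ tl ys)"
  unfolding walk_from_to_def by (cases ys; cases "tl ys") (auto simp: successively_append_iff)

lemma walk_from_to_rev:
  "(\<And>a b. R a b \<Longrightarrow> R b a) \<Longrightarrow> walk_from_to R u v xs \<Longrightarrow> walk_from_to R v u (rev xs)"
  unfolding walk_from_to_def by (auto simp: hd_rev last_rev elim: successively_mono)

lemma gdist_le_walk: "walk_from_to E u v xs \<Longrightarrow> gdist E u v \<le> length xs - 1"
  unfolding gdist_def by (rule Least_le) (auto simp: walk_from_to_def)

lemma gdist_le_via:
  assumes "\<And>a b. E a b \<Longrightarrow> E b a"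
    and "walk_from_to E u w xs" "walk_from_to E v w ys"
  shows "gdist E u v \<le> (length xs - 1) + (length ys - 1)"
proof -
  have "walk_from_to E u v (xs @ tl (rev ys))"
    using walk_from_to_append[OF assms(2) walk_from_to_rev[OF assms(1,3)]] .
  moreover have "xs \<noteq> []" "ys \<noteq> []" using assms(2,3) unfolding walk_from_to_def by auto
  ultimately show ?thesis using gdist_le_walk by fastforce
qed

lemma gdist_le_1: "E u v \<Longrightarrow> gdist E u v \<le> 1"
  using gdist_le_walk[of E u v "[u, v]"] by (simp add: walk_from_to_def)

lemma cycle_len_le: "0 < k \<Longrightarrow> (s ^^ k) v = v \<Longrightarrow> cycle_len s v \<le> k"
  unfolding cycle_len_def by (rule Least_le) simp

lemma permutes_if_periodic:
  assumes "finite V" "\<And>v. v \<in> V \<Longrightarrow> s v \<in> V" "\<And>v. v \<notin> V \<Longrightarrow> s v = v"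
    and "\<And>v. v \<in> V \<Longrightarrow> \<exists>k>0. (s ^^ k) v = v"
  shows "s permutes V"
proof (rule bij_imp_permutes)
  have "V \<subseteq> s ` V"
  proof
    fix v assume "v \<in> V"
    then obtain k where "(s ^^ Suc k) v = v" using assms(4) gr0_implies_Suc by metis
    moreover have "(s ^^ k) v \<in> V" using \<open>v \<in> V\<close> assms(2) by (induction k) auto
    ultimately show "v \<in> s ` V" by (metis funpow.simps(2) image_eqI o_apply)
  qed
  then have "s ` V = V" using assms(2) by blast
  then show "bij_betw s V V" using assms(1) by (simp add: bij_betw_def eq_card_imp_inj_on)
qed (use assms(3) in blast)

lemma induced_path_adj_nth:
  assumes "induced_path E C xs" "i < length xs" "j < length xs"
  shows "E (xs ! i) (xs ! j) \<longleftrightarrow> i = Suc j \<or> j = Suc i"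
proof -
  have d: "distinct xs" and C: "set xs = C" using assms(1) unfolding induced_path_def by auto
  have "{xs ! k, xs ! Suc k} = {xs ! i, xs ! j} \<longleftrightarrow> (k = i \<and> Suc k = j) \<or> (k = j \<and> Suc k = i)"
    if "Suc k < length xs" for k
    using that assms(2,3) nth_eq_iff_index_eq[OF d] by (auto simp: doubleton_eq_iff)
  then show ?thesis using assms unfolding induced_path_def by (auto simp: C[symmetric])
qed

lemma induced_path_rev_adj_nth:
  assumes "induced_path E C xs" "i < length xs" "j < length xs"
  shows "E (rev xs ! i) (rev xs ! j) \<longleftrightarrow> i = Suc j \<or> j = Suc i"
  using induced_path_adj_nth[OF assms(1), of "length xs - Suc i" "length xs - Suc j"] assms(2,3)
  by (auto simp: rev_nth)

lemma finite_involution_fixing_at_most_one: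
  assumes "finite A"
  shows "\<exists>p. (\<forall>a\<in>A. p a \<in> A \<and> p (p a) = a) \<and> (\<forall>a\<in>A. \<forall>b\<in>A. p a = a \<and> p b = b \<longrightarrow> a = b)"
  using assms
proof (induction A rule: finite_induct)
  case (insert z F)
  then obtain p where p1: "\<forall>a\<in>F. p a \<in> F \<and> p (p a) = a"
    and p2: "\<forall>a\<in>F. \<forall>b\<in>F. p a = a \<and> p b = b \<longrightarrow> a = b" by blast
  show ?case
  proof (cases "\<exists>f\<in>F. p f = f")
    case True
    then obtain f where f: "f \<in> F" "p f = f" by blast
    define q where "q = p(z := f, f := z)"
    have "\<forall>a\<in>F. a \<noteq> f \<longrightarrow> p a \<noteq> f" using p1 f by metis
    then have "\<forall>a\<in>insert z F. q a \<in> insert z F \<and> q (q a) = a"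
      using p1 f insert(2) unfolding q_def by auto
    moreover have "\<forall>a\<in>insert z F. q a \<noteq> a"
      using p2 f insert(2) unfolding q_def by auto
    ultimately show ?thesis by blast
  next
    case False
    define q where "q = p(z := z)"
    have "\<forall>a\<in>insert z F. q a \<in> insert z F \<and> q (q a) = a"
      using p1 insert(2) unfolding q_def by auto
    moreover have "\<forall>a\<in>insert z F. \<forall>b\<in>insert z F. q a = a \<and> q b = b \<longrightarrow> a = b"
      using False insert(2) unfolding q_def by auto
    ultimately show ?thesis by blast
  qed
qed simp

section \<open>The model spider and its placement\<close>

text \<open>\<open>Leg a j\<close> is the vertex at distance \<open>j + 1\<close> from the centre on the leg starting at \<open>a\<close>.\<close>
datatype 'b spider_vertex = Leaf | Centre | Leg 'b nat

fun spider_adj :: "'b spider_vertex \<Rightarrow> 'b spider_vertex \<Rightarrow> bool" where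
  "spider_adj Leaf Centre = True"
| "spider_adj Centre Leaf = True"
| "spider_adj Centre (Leg a j) = (j = 0)"
| "spider_adj (Leg a j) Centre = (j = 0)"
| "spider_adj (Leg a i) (Leg b j) = (a = b \<and> (i = Suc j \<or> j = Suc i))"
| "spider_adj _ _ = False"

lemma spider_adj_sym: "spider_adj c d = spider_adj d c"
  by (cases c; cases d) auto

fun spider_depth :: "'b spider_vertex \<Rightarrow> nat" where
  "spider_depth Leaf = 1"
| "spider_depth Centre = 0"
| "spider_depth (Leg a j) = Suc j"

definition spider_model :: "'b set \<Rightarrow> ('b \<Rightarrow> nat) \<Rightarrow> 'b spider_vertex set" where
  "spider_model A len = {Leaf, Centre} \<union> {Leg a j |a j. a \<in> A \<and> j < len a}"

lemma Leaf_Centre_in_spider_model [simp]: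
  "Leaf \<in> spider_model A len" "Centre \<in> spider_model A len"
  unfolding spider_model_def by auto

lemma Leg_in_spider_model: "Leg a j \<in> spider_model A len \<longleftrightarrow> a \<in> A \<and> j < len a"
  unfolding spider_model_def by auto

locale leg_pairing =
  fixes A :: "'b set" and len :: "'b \<Rightarrow> nat" and p :: "'b \<Rightarrow> 'b" and a0 :: 'b
  assumes len_2_or_3: "a \<in> A \<Longrightarrow> len a = 2 \<or> len a = 3"
    and pair_in: "a \<in> A \<Longrightarrow> p a \<in> A"
    and pair_pair: "a \<in> A \<Longrightarrow> p (p a) = a"
    and a0_in: "a0 \<in> A"
    and pair_fixed: "a \<in> A \<Longrightarrow> p a = a \<Longrightarrow> a = a0"
begin

abbreviation long :: "'b \<Rightarrow> bool" where "long a \<equiv> len a = 3"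

abbreviation model :: "'b spider_vertex set" where "model \<equiv> spider_model A len"

lemma Leg_in_model: "Leg a j \<in> model \<longleftrightarrow> a \<in> A \<and> (j = 0 \<or> j = 1 \<or> (long a \<and> j = 2))"
  using len_2_or_3[of a] by (auto simp: Leg_in_spider_model)

definition paired :: "'b \<Rightarrow> bool" where
  "paired a \<longleftrightarrow> a \<in> A \<and> a \<noteq> a0 \<and> a \<noteq> p a0"

lemma paired_partner: "paired a \<Longrightarrow> paired (p a) \<and> p a \<noteq> a \<and> p (p a) = a"
  unfolding paired_def using pair_in pair_pair pair_fixed a0_in by metis

lemma partner_a0: "p a0 \<in> A" "p (p a0) = a0"
  using pair_in pair_pair a0_in by auto

lemma leg_cases [consumes 1, case_names a0 partner paired]:
  assumes "a \<in> A"
  obtains "a = a0" | "p a0 \<noteq> a0" "a = p a0" | "paired a"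
  using assms unfolding paired_def by blast

text \<open>Two paired legs \<open>a\<close>, \<open>p a\<close> other than \<open>a0\<close> and its partner are permuted among themselves by
  cycles of length 3, 4 or 5, according to their lengths. For an odd number of legs the leaf,
  the centre and the leg \<open>a0\<close> form one cycle; otherwise \<open>Leaf\<close> and \<open>Leg a0 0\<close> are swapped and the
  centre joins a cycle on the partner leg of \<open>a0\<close>.\<close>
definition placement :: "'b spider_vertex \<Rightarrow> 'b spider_vertex" where
  "placement c = (case c of
      Leaf \<Rightarrow> Leg a0 0
    | Centre \<Rightarrow> if p a0 = a0 then Leaf else Leg (p a0) 1
    | Leg a j \<Rightarrow>
        if a = a0 then
          (if p a0 = a0 then
             (if j = 0 then Leg a0 (len a0 - 1) else if j = 1 then Centre else Leg a0 1)
           else (if j = 0 then Leaf else if j = 1 then Leg (p a0) 0 else Leg a0 1))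
        else if p a0 \<noteq> a0 \<and> a = p a0 then
          (if j = 0 then Leg a0 (len a0 - 1) else if j = 1 \<and> long a then Leg a 2 else Centre)
        else
          (if j = 0 then Leg (p a) 1
           else if j = 1 then (if long a then Leg a 2 else Leg a 0)
           else if long (p a) then Leg (p a) 0 else Leg a 0))"

lemma placement_Leaf [simp]: "placement Leaf = Leg a0 0"
  and placement_Centre [simp]: "placement Centre = (if p a0 = a0 then Leaf else Leg (p a0) 1)"
  unfolding placement_def by simp_all

lemma placement_a0:
  "placement (Leg a0 j) =
     (if p a0 = a0 then
        (if j = 0 then Leg a0 (if long a0 then 2 else 1) else if j = 1 then Centre else Leg a0 1)
      else (if j = 0 then Leaf else if j = 1 then Leg (p a0) 0 else Leg a0 1))"
  unfolding placement_def using len_2_or_3[OF a0_in] by auto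

lemma placement_partner:
  "p a0 \<noteq> a0 \<Longrightarrow> placement (Leg (p a0) j) =
     (if j = 0 then Leg a0 (if long a0 then 2 else 1) else if j = 1 \<and> long (p a0) then Leg (p a0) 2
      else Centre)"
  unfolding placement_def using len_2_or_3[OF a0_in] partner_a0 by auto

lemma placement_paired:
  "paired a \<Longrightarrow> placement (Leg a j) =
     (if j = 0 then Leg (p a) 1
      else if j = 1 then (if long a then Leg a 2 else Leg a 0)
      else if long (p a) then Leg (p a) 0 else Leg a 0)"
  unfolding placement_def paired_def by auto

lemmas placement_simps = placement_a0 placement_partner placement_paired

lemma placement_in_model: "c \<in> model \<Longrightarrow> placement c \<in> model"
proof (cases c)
  case (Leg a j)
  assume "c \<in> model"
  then have "a \<in> A" "j = 0 \<or> j = 1 \<or> (long a \<and> j = 2)" using Leg Leg_in_model by auto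
  then show ?thesis
    using Leg a0_in partner_a0 paired_partner[of a]
    by (cases rule: leg_cases) (auto simp: Leg_in_model placement_simps paired_def)
qed (use a0_in partner_a0 in \<open>auto simp: Leg_in_model\<close>)

lemma placement_no_fixpoint: "c \<in> model \<Longrightarrow> placement c \<noteq> c"
proof (cases c)
  case (Leg a j)
  assume "c \<in> model"
  then have "a \<in> A" "j = 0 \<or> j = 1 \<or> (long a \<and> j = 2)" using Leg Leg_in_model by auto
  then show ?thesis
    using Leg paired_partner[of a] by (cases rule: leg_cases) (auto simp: placement_simps)
qed simp_all

lemma placement_Centre_Leg: "a \<in> A \<Longrightarrow> \<not> spider_adj (placement Centre) (placement (Leg a 0))"
  by (cases rule: leg_cases) (use paired_partner[of a] in \<open>auto simp: placement_simps paired_def\<close>)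

lemma placement_Leg_Leg:
  "Leg a (Suc i) \<in> model \<Longrightarrow> \<not> spider_adj (placement (Leg a i)) (placement (Leg a (Suc i)))"
proof -
  assume "Leg a (Suc i) \<in> model"
  then have "a \<in> A" "i = 0 \<or> (long a \<and> i = 1)" using Leg_in_model by auto
  then show ?thesis
    using paired_partner[of a] by (cases rule: leg_cases) (auto simp: placement_simps)
qed

theorem placement_2_placement:
  assumes "c \<in> model" "d \<in> model" "spider_adj c d"
  shows "\<not> spider_adj (placement c) (placement d)"
proof (cases c; cases d)
  fix a i b j assume "c = Leg a i" "d = Leg b j"
  then show ?thesis
    using assms placement_Leg_Leg[of a i] placement_Leg_Leg[of a j] spider_adj_sym by auto
next
  fix a i assume "c = Leg a i" "d = Centre"
  then show ?thesis
    using assms placement_Centre_Leg[of a] spider_adj_sym[of "placement c" "placement d"]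
    by (auto simp: Leg_in_spider_model)
next
  fix a i assume "c = Centre" "d = Leg a i"
  then show ?thesis using assms placement_Centre_Leg[of a] by (auto simp: Leg_in_spider_model)
qed (use assms partner_a0 in auto)

lemma funpow_unfold:
  "(f ^^ 2) c = f (f c)" "(f ^^ 3) c = f (f (f c))" "(f ^^ 4) c = f (f (f (f c)))"
  "(f ^^ 5) c = f (f (f (f (f c))))"
  by (simp_all add: numeral_eq_Suc)

theorem placement_cycles:
  assumes "c \<in> model"
  shows "\<exists>k\<in>{2, 3, 4, 5}. (placement ^^ k) c = c"
proof (cases c)
  case (Leg a j)
  then have "a \<in> A" "j = 0 \<or> j = 1 \<or> (long a \<and> j = 2)" using assms Leg_in_model by auto
  then show ?thesis
    using Leg paired_partner[of a] partner_a0
    by (cases rule: leg_cases; cases "p a0 = a0") (auto simp: placement_simps funpow_unfold)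
qed (use partner_a0 in \<open>auto simp: placement_simps funpow_unfold\<close>)

lemma spider_depth_le_3: "c \<in> model \<Longrightarrow> spider_depth c \<le> 3"
  by (cases c) (auto simp: Leg_in_model)

lemma placement_near:
  assumes "c \<in> model"
  shows "spider_depth c + spider_depth (placement c) \<le> 4 \<or> spider_adj c (placement c)"
proof (cases c)
  case (Leg a j)
  then have "a \<in> A" "j = 0 \<or> j = 1 \<or> (long a \<and> j = 2)" using assms Leg_in_model by auto
  then show ?thesis
    using Leg paired_partner[of a] by (cases rule: leg_cases) (auto simp: placement_simps)
qed simp_all

end

section \<open>Spiders\<close>

locale spider =
  fixes V :: "'a set" and E :: "'a \<Rightarrow> 'a \<Rightarrow> bool" and x y :: 'a and A :: "'a set"
    and leg :: "'a \<Rightarrow> 'a list"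
  assumes simple: "simple_graph V E"
    and leaf_edge: "E x y"
    and leaf_adj: "E x v \<Longrightarrow> v = y"
    and centre_adj: "E y a \<longleftrightarrow> a = x \<or> a \<in> A"
    and legs_nonempty: "A \<noteq> {}"
    and leg_hd: "a \<in> A \<Longrightarrow> hd (leg a) = a"
    and leg_length: "a \<in> A \<Longrightarrow> length (leg a) = 2 \<or> length (leg a) = 3"
    and leg_distinct: "a \<in> A \<Longrightarrow> distinct (leg a)"
    and leg_adj: "a \<in> A \<Longrightarrow> i < length (leg a) \<Longrightarrow> j < length (leg a) \<Longrightarrow>
      E (leg a ! i) (leg a ! j) \<longleftrightarrow> i = Suc j \<or> j = Suc i"
    and legs_disjoint: "a \<in> A \<Longrightarrow> a' \<in> A \<Longrightarrow> a \<noteq> a' \<Longrightarrow> set (leg a) \<inter> set (leg a') = {}"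
    and centre_notin_leg: "a \<in> A \<Longrightarrow> y \<notin> set (leg a)"
    and leg_closed: "a \<in> A \<Longrightarrow> u \<in> set (leg a) \<Longrightarrow> E u w \<Longrightarrow> w \<in> set (leg a) \<or> (u = a \<and> w = y)"
    and vertices: "V = {x, y} \<union> (\<Union>a\<in>A. set (leg a))"
begin

lemma E_sym: "E u v \<Longrightarrow> E v u"
  using simple unfolding simple_graph_def by blast

lemma E_irrefl: "\<not> E u u"
  using simple unfolding simple_graph_def by blast

lemma E_in_V: "E u v \<Longrightarrow> u \<in> V \<and> v \<in> V"
  using simple unfolding simple_graph_def by blast

lemma finite_V: "finite V"
  using simple unfolding simple_graph_def by blast

lemma leaf_ne_centre: "x \<noteq> y"
  using leaf_edge E_irrefl by blast

lemma finite_legs: "finite A"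
proof -
  have "A \<subseteq> V" using centre_adj E_in_V by blast
  then show ?thesis using finite_V finite_subset by blast
qed

lemma leg_nonempty: "a \<in> A \<Longrightarrow> leg a \<noteq> []"
  using leg_length by fastforce

lemma leg_nth_0: "a \<in> A \<Longrightarrow> leg a ! 0 = a"
  using leg_hd leg_nonempty by (simp add: hd_conv_nth)

lemma hd_in_leg: "a \<in> A \<Longrightarrow> a \<in> set (leg a)"
  using leg_hd leg_nonempty hd_in_set by metis

lemma leg_vertex_in_legs:
  assumes "a \<in> A" "leg a ! j \<in> A" "j < length (leg a)"
  shows "j = 0"
proof -
  have "leg a ! j \<in> set (leg a) \<inter> set (leg (leg a ! j))"
    using assms hd_in_leg nth_mem by blast
  then have "leg a ! j = leg a ! 0"
    using legs_disjoint[OF assms(1,2)] leg_nth_0[OF assms(1)] by (cases "a = leg a ! j") auto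
  then show ?thesis using assms(1,3) leg_distinct leg_nonempty by (simp add: nth_eq_iff_index_eq)
qed

lemma leaf_notin_leg: "a \<in> A \<Longrightarrow> x \<notin> set (leg a)"
proof
  assume a: "a \<in> A" and "x \<in> set (leg a)"
  then have "x = a" using leg_closed[OF a _ leaf_edge] centre_notin_leg by blast
  then have "leg a ! 0 = x" using leg_nth_0[OF a] by simp
  moreover have "E (leg a ! 0) (leg a ! 1)" using leg_adj[OF a, of 0 1] leg_length[OF a] by fastforce
  ultimately have "leg a ! 1 \<in> set (leg a) \<and> leg a ! 1 = y"
    using leaf_adj leg_length[OF a] by auto
  then show False using centre_notin_leg[OF a] by blast
qed

fun emb :: "'a spider_vertex \<Rightarrow> 'a" where
  "emb Leaf = x"
| "emb Centre = y"
| "emb (Leg a j) = leg a ! j"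

abbreviation coords :: "'a spider_vertex set" where
  "coords \<equiv> spider_model A (\<lambda>a. length (leg a))"

lemma emb_inj: "inj_on emb coords"
proof
  fix c d assume c: "c \<in> coords" and d: "d \<in> coords" and eq: "emb c = emb d"
  show "c = d"
  proof (cases c; cases d)
    fix a i b j assume cd: "c = Leg a i" "d = Leg b j"
    then have a: "a \<in> A" "i < length (leg a)" and b: "b \<in> A" "j < length (leg b)"
      using c d by (auto simp: Leg_in_spider_model)
    have "leg a ! i \<in> set (leg a) \<inter> set (leg b)" using a b eq cd by (metis IntI emb.simps(3) nth_mem)
    then have "a = b" using legs_disjoint[OF a(1) b(1)] by blast
    then show "c = d" using a b eq cd leg_distinct[of a] by (simp add: nth_eq_iff_index_eq)
  qed (use c d eq leaf_notin_leg centre_notin_leg leaf_ne_centre in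
    \<open>auto simp: Leg_in_spider_model dest: nth_mem\<close>)
qed

lemma emb_image: "emb ` coords = V"
proof
  show "emb ` coords \<subseteq> V"
    using vertices nth_mem by (fastforce simp: spider_model_def)
  show "V \<subseteq> emb ` coords"
  proof
    fix v assume "v \<in> V"
    then consider "v = x" | "v = y" | a where "a \<in> A" "v \<in> set (leg a)" using vertices by blast
    then show "v \<in> emb ` coords"
    proof cases
      case 3
      then obtain j where "j < length (leg a)" "v = leg a ! j" by (metis in_set_conv_nth)
      then show ?thesis using 3 by (intro image_eqI[of _ _ "Leg a j"]) (auto simp: Leg_in_spider_model)
    qed (metis emb.simps(1) Leaf_Centre_in_spider_model(1) image_eqI,
         metis emb.simps(2) Leaf_Centre_in_spider_model(2) image_eqI)
  qed
qed

lemma V_emb_cases: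
  assumes "v \<in> V"
  obtains c where "c \<in> coords" "v = emb c"
  using assms emb_image by blast

lemma E_sym_iff: "E u v \<longleftrightarrow> E v u"
  using E_sym by blast

lemma leaf_not_adj_leg: "a \<in> A \<Longrightarrow> u \<in> set (leg a) \<Longrightarrow> \<not> E x u"
  using leaf_adj centre_notin_leg by blast

lemma centre_adj_leg_iff:
  assumes "a \<in> A" "i < length (leg a)"
  shows "E y (leg a ! i) \<longleftrightarrow> i = 0"
proof -
  have "leg a ! i \<noteq> x" using leaf_notin_leg[OF assms(1)] nth_mem[OF assms(2)] by metis
  then show ?thesis
    using centre_adj assms leg_vertex_in_legs leg_nth_0 by metis
qed

lemma legs_not_adj:
  "a \<in> A \<Longrightarrow> b \<in> A \<Longrightarrow> a \<noteq> b \<Longrightarrow> u \<in> set (leg a) \<Longrightarrow> w \<in> set (leg b) \<Longrightarrow> \<not> E u w"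
  using leg_closed[of a u w] legs_disjoint[of a b] centre_notin_leg[of b] by blast

lemma emb_adj:
  assumes "c \<in> coords" "d \<in> coords"
  shows "E (emb c) (emb d) \<longleftrightarrow> spider_adj c d"
proof (cases c; cases d)
  fix a i b j assume "c = Leg a i" "d = Leg b j"
  then show ?thesis
    using assms leg_adj[of a i j] legs_not_adj[of a b "leg a ! i" "leg b ! j"]
    by (auto simp: Leg_in_spider_model)
next
  fix a i assume "c = Leg a i" "d = Centre"
  then show ?thesis
    using assms centre_adj_leg_iff[of a i] E_sym_iff[of y] by (auto simp: Leg_in_spider_model)
next
  fix a i assume "c = Centre" "d = Leg a i"
  then show ?thesis using assms centre_adj_leg_iff[of a i] by (auto simp: Leg_in_spider_model)
next
  fix a i assume "c = Leg a i" "d = Leaf"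
  then show ?thesis using assms leaf_not_adj_leg[of a] E_sym_iff[of x]
    by (auto simp: Leg_in_spider_model)
next
  fix a i assume "c = Leaf" "d = Leg a i"
  then show ?thesis using assms leaf_not_adj_leg[of a] by (auto simp: Leg_in_spider_model)
qed (use leaf_edge E_sym[OF leaf_edge] E_irrefl in auto)

lemma walk_to_centre:
  assumes "c \<in> coords"
  shows "\<exists>ws. walk_from_to E (emb c) y ws \<and> length ws = Suc (spider_depth c)"
proof (cases c)
  case (Leg a j)
  then have a: "a \<in> A" and j: "j < length (leg a)" using assms by (auto simp: Leg_in_spider_model)
  let ?ws = "rev (take (Suc j) (leg a))"
  have "successively E (take (Suc j) (leg a))"
    using leg_adj[OF a] by (auto simp: successively_conv_nth)
  then have "successively (\<lambda>u v. E v u) (take (Suc j) (leg a))"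
    by (rule successively_mono) (rule E_sym)
  then have "successively E ?ws" by simp
  moreover have "hd ?ws = leg a ! j"
    using j by (simp add: hd_rev take_Suc_conv_app_nth)
  moreover have "last ?ws = a"
    using leg_hd[OF a] leg_nonempty[OF a] by (simp add: last_rev)
  ultimately have "walk_from_to E (leg a ! j) a ?ws"
    unfolding walk_from_to_def using leg_nonempty[OF a] by simp
  moreover have "E a y" using E_sym[of y a] centre_adj a by blast
  ultimately have "walk_from_to E (leg a ! j) y (?ws @ [y])"
    by (rule walk_from_to_snoc)
  then show ?thesis using Leg j by (intro exI[of _ "?ws @ [y]"]) auto
next
  case Leaf
  then show ?thesis using leaf_edge by (intro exI[of _ "[x, y]"]) (simp add: walk_from_to_def)
next
  case Centre
  then show ?thesis by (intro exI[of _ "[y]"]) (simp add: walk_from_to_def)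
qed

lemma gdist_emb_le:
  assumes "c \<in> coords" "d \<in> coords"
  shows "gdist E (emb c) (emb d) \<le> spider_depth c + spider_depth d"
proof -
  obtain ws vs where ws: "walk_from_to E (emb c) y ws" "length ws = Suc (spider_depth c)"
    and vs: "walk_from_to E (emb d) y vs" "length vs = Suc (spider_depth d)"
    using walk_to_centre assms by meson
  then show ?thesis using gdist_le_via[OF E_sym ws(1) vs(1)] by simp
qed

end

locale paired_spider = spider V E x y A leg + leg_pairing A "\<lambda>a. length (leg a)" p a0
  for V :: "'a set" and E x y A leg p a0
begin

definition tree_placement :: "'a \<Rightarrow> 'a" where
  "tree_placement v = (if v \<in> V then emb (placement (inv_into coords emb v)) else v)"

lemma tree_placement_emb: "c \<in> coords \<Longrightarrow> tree_placement (emb c) = emb (placement c)"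
  using emb_image emb_inj by (auto simp: tree_placement_def inv_into_f_f)

lemma tree_placement_funpow_emb:
  "c \<in> coords \<Longrightarrow> (tree_placement ^^ k) (emb c) = emb ((placement ^^ k) c)"
proof (induction k)
  case (Suc k)
  have "(placement ^^ k) c \<in> coords"
    using Suc.prems placement_in_model by (induction k) auto
  then show ?case using Suc by (simp add: tree_placement_emb)
qed simp

lemma tree_placement_permutes: "tree_placement permutes V"
proof (rule permutes_if_periodic)
  fix v assume "v \<in> V"
  then obtain c where c: "c \<in> coords" "v = emb c" by (rule V_emb_cases)
  then show "tree_placement v \<in> V"
    using tree_placement_emb placement_in_model emb_image by auto
  obtain k where "k \<in> {2, 3, 4, 5}" "(placement ^^ k) c = c" using placement_cycles c(1) by blast
  then show "\<exists>k>0. (tree_placement ^^ k) v = v"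
    using tree_placement_funpow_emb c by (intro exI[of _ k]) auto
qed (simp_all add: finite_V tree_placement_def)

lemma tree_placement_no_fixpoint: "v \<in> V \<Longrightarrow> tree_placement v \<noteq> v"
  by (metis V_emb_cases placement_no_fixpoint placement_in_model tree_placement_emb inj_onD[OF emb_inj])

lemma tree_placement_two_placement: "two_placement E tree_placement"
  unfolding two_placement_def
proof (intro allI impI)
  fix u v assume "E u v"
  moreover obtain c d where "c \<in> coords" "u = emb c" "d \<in> coords" "v = emb d"
    using V_emb_cases E_in_V \<open>E u v\<close> by metis
  ultimately show "\<not> E (tree_placement u) (tree_placement v)"
    using emb_adj placement_2_placement placement_in_model tree_placement_emb by metis
qed

lemma gdist_tree_placement_le_depth:
  assumes "c \<in> coords" "d \<in> coords"
  shows "gdist E (tree_placement (emb c)) (tree_placement (emb d))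
    \<le> spider_depth (placement c) + spider_depth (placement d)"
  using gdist_emb_le[OF placement_in_model placement_in_model] tree_placement_emb assms by simp

lemma tree_placement_edge_dist: "E u v \<Longrightarrow> gdist E (tree_placement u) (tree_placement v) \<le> 6"
proof -
  assume "E u v"
  then obtain c d where c: "c \<in> coords" "u = emb c" and d: "d \<in> coords" "v = emb d"
    using V_emb_cases E_in_V by metis
  have "spider_depth (placement c) \<le> 3" "spider_depth (placement d) \<le> 3"
    using spider_depth_le_3 placement_in_model c(1) d(1) by blast+
  then show ?thesis using gdist_tree_placement_le_depth[OF c(1) d(1)] unfolding c(2) d(2) by linarith
qed

lemma tree_placement_dist: "v \<in> V \<Longrightarrow> gdist E v (tree_placement v) \<le> 4"
proof -
  assume "v \<in> V"
  then obtain c where c: "c \<in> coords" "v = emb c" by (rule V_emb_cases)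
  have "gdist E (emb c) (emb (placement c)) \<le> 4"
    using placement_near[OF c(1)]
  proof
    assume "spider_depth c + spider_depth (placement c) \<le> 4"
    then show ?thesis using gdist_emb_le[OF c(1) placement_in_model[OF c(1)]] by linarith
  next
    assume "spider_adj c (placement c)"
    then have "E (emb c) (emb (placement c))"
      using emb_adj[OF c(1) placement_in_model[OF c(1)]] by simp
    then show ?thesis using gdist_le_1 by fastforce
  qed
  then show ?thesis using c tree_placement_emb by simp
qed

lemma tree_placement_leaf_dist: "gdist E x (tree_placement x) \<le> 2"
  using gdist_emb_le[of Leaf "Leg a0 0"] tree_placement_emb[of Leaf] a0_in leg_nonempty
  by (simp add: Leg_in_spider_model)

lemma tree_placement_centre_dist: "gdist E y (tree_placement y) \<le> 3"
proof -
  have "gdist E (emb Centre) (emb (placement Centre)) \<le> 3"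
    using gdist_emb_le[OF _ placement_in_model, of Centre Centre]
      spider_depth_le_3[OF placement_in_model[of Centre]]
    by (simp del: placement_Centre)
  then show ?thesis using tree_placement_emb[of Centre] by (simp del: placement_Centre)
qed

lemma tree_placement_cycle_len: "v \<in> V \<Longrightarrow> cycle_len tree_placement v \<le> 5"
proof -
  assume "v \<in> V"
  then obtain c where c: "c \<in> coords" "v = emb c" by (rule V_emb_cases)
  obtain k where "k \<in> {2, 3, 4, 5}" "(placement ^^ k) c = c" using placement_cycles c(1) by blast
  then show ?thesis using cycle_len_le[of k tree_placement v] tree_placement_funpow_emb c by auto
qed

theorem tree_placement_well: "well_2_placement V E x tree_placement"
  unfolding well_2_placement_def
  using tree_placement_permutes tree_placement_no_fixpoint tree_placement_two_placement
    tree_placement_edge_dist tree_placement_leaf_dist tree_placement_centre_dist leaf_adj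
    tree_placement_dist tree_placement_cycle_len
  by blast

end

context spider
begin

theorem well_2_placement_exists: "\<exists>s. well_2_placement V E x s"
proof -
  obtain p where p_inv: "\<forall>a\<in>A. p a \<in> A \<and> p (p a) = a"
    and p_fix: "\<forall>a\<in>A. \<forall>b\<in>A. p a = a \<and> p b = b \<longrightarrow> a = b"
    using finite_involution_fixing_at_most_one[OF finite_legs] by blast
  obtain a0 where "a0 \<in> A" "\<forall>a\<in>A. p a = a \<longrightarrow> a = a0"
  proof (cases "\<exists>a\<in>A. p a = a")
    case True
    then show ?thesis using that p_fix by blast
  next
    case False
    then show ?thesis using that legs_nonempty by blast
  qed
  then have "leg_pairing A (\<lambda>a. length (leg a)) p a0"
    using p_inv leg_length unfolding leg_pairing_def by blast
  then interpret paired_spider V E x y A leg p a0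
    by (intro paired_spider.intro spider_axioms)
  show ?thesis using tree_placement_well by blast
qed

end

section \<open>Trees whose centre has \<open>F\<close>-tree branches\<close>

locale F_branched_centre =
  fixes V :: "'a set" and E :: "'a \<Rightarrow> 'a \<Rightarrow> bool" and x y :: 'a
  assumes simple: "simple_graph V E"
    and connected: "connected_graph V E"
    and leaf_edge: "E x y"
    and leaf_deg: "deg V E x = 1"
    and centre_deg: "deg V E y \<ge> 3"
    and F_branches: "\<forall>y'. E y y' \<and> y' \<noteq> x \<longrightarrow>
      nbr_F_tree E y' y \<and> card (comp_minus_edge E y' y) \<noteq> 1"
begin

lemma E_sym: "E u v \<Longrightarrow> E v u"
  using simple unfolding simple_graph_def by blast

lemma E_irrefl: "\<not> E u u"
  using simple unfolding simple_graph_def by blast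

lemma E_in_V: "E u v \<Longrightarrow> u \<in> V \<and> v \<in> V"
  using simple unfolding simple_graph_def by blast

lemma leaf_adj: "E x v \<Longrightarrow> v = y"
proof -
  assume "E x v"
  have "card {w \<in> V. E x w} = 1" using leaf_deg by (simp add: deg_def)
  then obtain z where "{w \<in> V. E x w} = {z}" by (rule card_1_singletonE)
  moreover have "v \<in> {w \<in> V. E x w}" "y \<in> {w \<in> V. E x w}"
    using \<open>E x v\<close> leaf_edge E_in_V by auto
  ultimately show "v = y" by simp
qed

definition legs :: "'a set" where "legs = {a. E y a \<and> a \<noteq> x}"

abbreviation branch :: "'a \<Rightarrow> 'a set" where "branch a \<equiv> comp_minus_edge E a y"

lemma centre_adj: "E y a \<longleftrightarrow> a = x \<or> a \<in> legs"
  unfolding legs_def using E_sym[OF leaf_edge] by (cases "a = x") simp_all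

lemma finite_V: "finite V"
  using simple unfolding simple_graph_def by blast

lemma legs_subset_V: "legs \<subseteq> V"
  unfolding legs_def using E_in_V by blast

lemma two_legs: "card legs \<ge> 2"
proof -
  have "finite legs" using finite_V legs_subset_V finite_subset by blast
  moreover have "{v \<in> V. E y v} \<subseteq> insert x legs" unfolding legs_def by blast
  ultimately have "deg V E y \<le> card (insert x legs)" unfolding deg_def by (simp add: card_mono)
  also have "\<dots> \<le> Suc (card legs)" by (simp add: card_insert_le_m1 card_insert_if)
  finally show ?thesis using centre_deg by simp
qed

lemma in_branch: "a \<in> branch a"
  unfolding comp_minus_edge_def walk_from_to_def by (intro CollectI exI[of _ "[a]"]) simp

lemma branch_closed: "u \<in> branch a \<Longrightarrow> E u w \<Longrightarrow> {u, w} \<noteq> {a, y} \<Longrightarrow> w \<in> branch a"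
  unfolding comp_minus_edge_def using walk_from_to_snoc by fastforce

lemma branch_subset_V: "a \<in> legs \<Longrightarrow> branch a \<subseteq> V"
proof
  fix v assume a: "a \<in> legs" and "v \<in> branch a"
  then obtain ws where "walk_from_to (\<lambda>p q. E p q \<and> {p, q} \<noteq> {a, y}) a v ws"
    unfolding comp_minus_edge_def by blast
  then show "v \<in> V"
    by (rule walk_from_to_closed) (use a E_in_V in \<open>auto simp: legs_def\<close>)
qed

lemma branch_F_tree:
  "a \<in> legs \<Longrightarrow> \<exists>xs. induced_path E (branch a) xs \<and> length xs \<le> 3 \<and>
     (length xs = 3 \<longrightarrow> a = hd xs \<or> a = last xs) \<and> card (branch a) \<noteq> 1"
  using F_branches unfolding legs_def nbr_F_tree_def Let_def by blast

lemma card_branch: "a \<in> legs \<Longrightarrow> card (branch a) \<le> 3"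
  using branch_F_tree unfolding induced_path_def by (metis distinct_card)

text \<open>If the removed edge \<open>a y\<close> did not separate \<open>y\<close> from \<open>a\<close>, the branch at \<open>a\<close> would contain
  \<open>x\<close>, \<open>y\<close> and two legs, too many vertices for an \<open>F\<close>-tree.\<close>
lemma centre_notin_branch: "a \<in> legs \<Longrightarrow> y \<notin> branch a"
proof
  assume a: "a \<in> legs" and y: "y \<in> branch a"
  have "legs \<noteq> {a}" using two_legs by auto
  then obtain a' where a': "a' \<in> legs" "a' \<noteq> a" using a by blast
  have ne: "a \<noteq> x" "a \<noteq> y" "a' \<noteq> x" "a' \<noteq> y" "x \<noteq> y"
    using a a' E_irrefl leaf_edge unfolding legs_def by auto
  have "x \<in> branch a" using branch_closed[OF y E_sym[OF leaf_edge]] ne by auto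
  moreover have "a' \<in> branch a" using branch_closed[OF y, of a'] a' ne by (auto simp: legs_def)
  ultimately have "{a, a', x, y} \<subseteq> branch a" using in_branch y by auto
  then have "card {a, a', x, y} \<le> card (branch a)"
    using branch_subset_V[OF a] finite_V finite_subset card_mono by metis
  moreover have "card {a, a', x, y} = 4" using ne a' by auto
  ultimately show False using card_branch[OF a] by simp
qed

lemma branch_adj: "a \<in> legs \<Longrightarrow> u \<in> branch a \<Longrightarrow> E u w \<Longrightarrow> w \<in> branch a \<or> (u = a \<and> w = y)"
  using branch_closed[of u a w] centre_notin_branch[of a] by (auto simp: doubleton_eq_iff)

lemma legs_in_branch:
  assumes "a \<in> legs" "a' \<in> legs" "a' \<in> branch a"
  shows "a' = a"
proof -
  have "E a' y" using E_sym[of y a'] centre_adj assms(2) by blast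
  then show ?thesis using branch_adj[OF assms(1,3)] centre_notin_branch[OF assms(1)] by blast
qed

definition is_leg :: "'a \<Rightarrow> 'a list \<Rightarrow> bool" where
  "is_leg a xs \<longleftrightarrow> set xs = branch a \<and> distinct xs \<and> hd xs = a \<and> (length xs = 2 \<or> length xs = 3) \<and>
    (\<forall>i<length xs. \<forall>j<length xs. E (xs ! i) (xs ! j) \<longleftrightarrow> i = Suc j \<or> j = Suc i)"

lemma branch_is_leg:
  assumes a: "a \<in> legs"
  shows "\<exists>xs. is_leg a xs"
proof -
  obtain xs where ip: "induced_path E (branch a) xs" and l3: "length xs \<le> 3"
    and end3: "length xs = 3 \<longrightarrow> a = hd xs \<or> a = last xs" and c1: "card (branch a) \<noteq> 1"
    using branch_F_tree[OF a] by blast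
  have set_xs: "set xs = branch a" and d: "distinct xs"
    using ip unfolding induced_path_def by blast+
  then have len: "length xs = card (branch a)" using distinct_card by metis
  moreover have "xs \<noteq> []" using set_xs in_branch[of a] by auto
  ultimately have len23: "length xs = 2 \<or> length xs = 3" using l3 c1 by (cases xs) auto
  have end_a: "a = hd xs \<or> a = last xs"
  proof (cases "length xs = 3")
    case False
    then obtain u v where "xs = [u, v]" using len23 by (auto simp: length_Suc_conv numeral_2_eq_2)
    then show ?thesis using set_xs in_branch[of a] by auto
  qed (use end3 in blast)
  show ?thesis
  proof (cases "a = hd xs")
    case True
    then show ?thesis
      using set_xs d len23 induced_path_adj_nth[OF ip] unfolding is_leg_def by blast
  next
    case False
    then have "hd (rev xs) = a" using end_a by (simp add: hd_rev)
    then show ?thesis using set_xs d len23 induced_path_rev_adj_nth[OF ip]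
      unfolding is_leg_def by (intro exI[of _ "rev xs"]) auto
  qed
qed

definition leg :: "'a \<Rightarrow> 'a list" where "leg a = (SOME xs. is_leg a xs)"

lemma leg_is_leg: "a \<in> legs \<Longrightarrow> is_leg a (leg a)"
  unfolding leg_def by (rule someI_ex) (rule branch_is_leg)

text \<open>Walking down the leg at \<open>a\<close> from a vertex of another branch never uses the edge
  at which that branch was cut off, so it reaches \<open>a\<close> inside that branch.\<close>
lemma branches_disjoint:
  assumes a: "a \<in> legs" and b: "b \<in> legs" and "a \<noteq> b"
  shows "branch a \<inter> branch b = {}"
proof -
  have "leg a ! k \<in> branch b \<Longrightarrow> k < length (leg a) \<Longrightarrow> leg a ! 0 \<in> branch b" for k
  proof (induction k)
    case (Suc k)
    have "E (leg a ! Suc k) (leg a ! k)" using leg_is_leg[OF a, unfolded is_leg_def] Suc.prems(2) by auto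
    then have "leg a ! k \<in> branch b"
      using branch_adj[OF b Suc.prems(1)] centre_notin_branch[OF a] leg_is_leg[OF a, unfolded is_leg_def] Suc.prems(2)
      by (metis Suc_lessD nth_mem)
    then show ?case using Suc by simp
  qed
  moreover have "leg a ! 0 = a" using leg_is_leg[OF a, unfolded is_leg_def] by (metis hd_conv_nth list.size(3) zero_neq_numeral)
  ultimately have "\<forall>u\<in>branch a. u \<in> branch b \<longrightarrow> a \<in> branch b"
    using leg_is_leg[OF a, unfolded is_leg_def] by (metis in_set_conv_nth)
  then show ?thesis using legs_in_branch[OF b a] assms(3) by blast
qed

lemma vertices_cover: "V = {x, y} \<union> (\<Union>a\<in>legs. branch a)"
proof
  let ?S = "{x, y} \<union> (\<Union>a\<in>legs. branch a)"
  show "V \<subseteq> ?S"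
  proof
    fix v assume "v \<in> V"
    then obtain ws where "walk_from_to E y v ws"
      using connected leaf_edge E_in_V unfolding connected_graph_def by blast
    then show "v \<in> ?S"
    proof (rule walk_from_to_closed)
      fix u w assume "u \<in> ?S" "E u w"
      then consider "u = x" | "u = y" | a where "a \<in> legs" "u \<in> branch a" by blast
      then show "w \<in> ?S"
      proof cases
        case 1 then show ?thesis using leaf_adj \<open>E u w\<close> by simp
      next
        case 2 then show ?thesis using centre_adj \<open>E u w\<close> in_branch by blast
      next
        case 3 then show ?thesis using branch_adj \<open>E u w\<close> by blast
      qed
    qed simp
  qed
  show "?S \<subseteq> V" using leaf_edge E_in_V branch_subset_V by blast
qed

lemma spider: "spider V E x y legs leg"
proof unfold_locales
  show "simple_graph V E" "E x y" by (fact simple, fact leaf_edge)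
  show "E x v \<Longrightarrow> v = y" for v by (fact leaf_adj)
  show "E y a \<longleftrightarrow> a = x \<or> a \<in> legs" for a by (fact centre_adj)
  show "legs \<noteq> {}" using two_legs by auto
next
  fix a assume a: "a \<in> legs"
  show "hd (leg a) = a" "length (leg a) = 2 \<or> length (leg a) = 3" "distinct (leg a)"
    using leg_is_leg[OF a, unfolded is_leg_def] by blast+
  show "y \<notin> set (leg a)" using leg_is_leg[OF a, unfolded is_leg_def] centre_notin_branch[OF a] by blast
  fix i j assume "i < length (leg a)" "j < length (leg a)"
  then show "E (leg a ! i) (leg a ! j) \<longleftrightarrow> i = Suc j \<or> j = Suc i" using leg_is_leg[OF a, unfolded is_leg_def] by blast
next
  fix a a' assume "a \<in> legs" "a' \<in> legs" "a \<noteq> a'"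
  then show "set (leg a) \<inter> set (leg a') = {}" using leg_is_leg branches_disjoint unfolding is_leg_def by presburger
next
  fix a u w assume "a \<in> legs" "u \<in> set (leg a)" "E u w"
  then show "w \<in> set (leg a) \<or> u = a \<and> w = y" using leg_is_leg branch_adj unfolding is_leg_def by blast
next
  have "(\<Union>a\<in>legs. set (leg a)) = (\<Union>a\<in>legs. branch a)" using leg_is_leg unfolding is_leg_def by blast
  then show "V = {x, y} \<union> (\<Union>a\<in>legs. set (leg a))" using vertices_cover by simp
qed

end

theorem lemma3p8:
  fixes V :: "'a set" and E :: "'a \<Rightarrow> 'a \<Rightarrow> bool" and x y :: 'a
  assumes "is_tree V E"
    and "\<not> is_star V E"
    and "E x y"
    and "deg V E x = 1"
    and "deg V E y \<ge> 3"
    and "\<forall>y'. E y y' \<and> y' \<noteq> x \<longrightarrow>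
           nbr_F_tree E y' y \<and> card (comp_minus_edge E y' y) \<noteq> 1"
  shows "\<exists>s. well_2_placement V E x s"
proof -
  interpret F_branched_centre V E x y
    using assms(1,3-6) unfolding is_tree_def by unfold_locales auto
  show ?thesis using spider.well_2_placement_exists[OF spider] .
qed

end
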